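(* Let $q$ be a prime power and $n,k,\delta$ positive integers with $k\le n$ and $\delta\le 2k$. Put $h=\left\lfloor k+1-\frac{\delta}{2}\right\rfloor$. Then $$B_q(n,k,\delta;3)\le\left(1+\frac{1}{2\left[{k\atop h}\right]_q-1}\right)\frac{\left[{n\atop h}\right]_q}{\left[{k\atop h}\right]_q}.$$
   Context: For a prime power $q$, $\mathcal{G}_q(n,k)$ denotes the set of all $k$-dimensional subspaces of $\mathbb{F}_q^n$, and the Gaussian binomial coefficient is $\left[{n\atop k}\right]_q=\prod_{i=0}^{k-1}\frac{q^n-q^i}{q^k-q^i}=|\mathcal{G}_q(n,k)|$. An $\alpha$-$(n,k,\delta)_q^c$ covering Grassmannian code is a subset $\mathcal{C}\subseteq\mathcal{G}_q(n,k)$ (no repeated codewords) such that every set of $\alpha$ distinct codewords of $\mathcal{C}$ spans a subspace of $\mathbb{F}_q^n$ of dimension at least $k+\delta$. $B_q(n,k,\delta;\alpha)$ denotes the maximum size of an $\alpha$-$(n,k,\delta)_q^c$ code. *)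

theory Defs
  imports Complex_Main "HOL.Vector_Spaces" "HOL-Library.Function_Algebras"
begin

text \<open>Ambient space F_q^n: functions nat => 'a vanishing at all indices >= n,
  with 'a a finite field of size q = CARD('a).\<close>

definition fscale :: "'a::field \<Rightarrow> (nat \<Rightarrow> 'a) \<Rightarrow> (nat \<Rightarrow> 'a)" where
  "fscale c v = (\<lambda>i. c * v i)"

global_interpretation fvs: vector_space "fscale :: 'a::field \<Rightarrow> (nat \<Rightarrow> 'a) \<Rightarrow> (nat \<Rightarrow> 'a)"
  by unfold_locales (auto simp: fscale_def fun_eq_iff algebra_simps)

definition Fqn :: "nat \<Rightarrow> (nat \<Rightarrow> 'a::field) set" where
  "Fqn n = {v. \<forall>i\<ge>n. v i = 0}"

definition Grass :: "nat \<Rightarrow> nat \<Rightarrow> (nat \<Rightarrow> 'a::field) set set" where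
  "Grass n k = {W. fvs.subspace W \<and> W \<subseteq> Fqn n \<and> fvs.dim W = k}"

definition covering_code ::
  "nat \<Rightarrow> nat \<Rightarrow> nat \<Rightarrow> nat \<Rightarrow> (nat \<Rightarrow> 'a::field) set set \<Rightarrow> bool" where
  "covering_code \<alpha> n k \<delta> C \<longleftrightarrow> C \<subseteq> Grass n k \<and>
     (\<forall>S \<subseteq> C. card S = \<alpha> \<longrightarrow> fvs.dim (fvs.span (\<Union>S)) \<ge> k + \<delta>)"

definition Bq :: "'a::{field,finite} itself \<Rightarrow> nat \<Rightarrow> nat \<Rightarrow> nat \<Rightarrow> nat \<Rightarrow> nat" where
  "Bq _ n k \<delta> \<alpha> = Max (card ` {C :: (nat \<Rightarrow> 'a) set set. covering_code \<alpha> n k \<delta> C})"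

definition gauss_binom :: "nat \<Rightarrow> nat \<Rightarrow> nat \<Rightarrow> real" where
  "gauss_binom q n k = (\<Prod>i<k. (real q ^ n - real q ^ i) / (real q ^ k - real q ^ i))"

end

theory Submission
  imports Defs "HOL-Library.FuncSet" "HOL-Library.Cardinality"
begin

(* With h = \<lfloor>k + 1 - \<delta>/2\<rfloor> we have 2k - \<delta> < 2h. For distinct codewords A, B, D the
   covering property and the dimension formula give dim (A \<inter> B) + dim ((A + B) \<inter> D) \<le> 2k - \<delta>.
   Hence a codeword A has at most one partner B with dim (A \<inter> B) \<ge> h. The shadow of A consists of
   the h-subspaces of A and, if A has a partner B with d = dim (A \<inter> B) > h, of the h-subspaces of
   A + B meeting A \<inter> B in dimension \<ge> h - 1 and lying in neither A nor B. Every h-subspace lies in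
   at most two shadows, so giving it weight 1/(number of shadows containing it), the total weight
   of all shadows is at most [n h]_q. The shadow of A has weight at least [k h]_q - 1/2: only the
   [d h]_q subspaces of A \<inter> B can be shared, costing at most [d h]_q/2, and they are compensated by
   the [d+1 h]_q - [d h]_q \<ge> [d h]_q extra subspaces of (A \<inter> B) + \<langle>w\<rangle>, w \<notin> A \<union> B, each of weight
   \<ge> 1/2 (when d = h the loss is only 1/2). Thus |C| ([k h]_q - 1/2) \<le> [n h]_q. *)

lemma subspace_Fqn: "fvs.subspace (Fqn n)"
  by (rule fvs.subspaceI) (auto simp: Fqn_def fscale_def)

lemma Fqn_mono: "m \<le> n \<Longrightarrow> Fqn m \<subseteq> Fqn n"
  by (auto simp: Fqn_def)

lemma bij_betw_restrict_Fqn: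
  "bij_betw (\<lambda>f. restrict f {..<n}) (Fqn n :: (nat \<Rightarrow> 'a::field) set) (PiE {..<n} (\<lambda>_. UNIV))"
proof (rule bij_betwI[where g = "\<lambda>f i. if i < n then f i else 0"])
  show "(\<lambda>f i. if i < n then f i else 0) \<in> PiE {..<n} (\<lambda>_. UNIV) \<rightarrow> (Fqn n :: (nat \<Rightarrow> 'a) set)"
    by (auto simp: Fqn_def)
qed (auto simp: Fqn_def fun_eq_iff PiE_def extensional_def)

lemma finite_Fqn: "finite (Fqn n :: (nat \<Rightarrow> 'a::{field,finite}) set)"
proof -
  have "finite (PiE {..<n} (\<lambda>_. UNIV :: 'a set))"
    by (simp add: finite_PiE)
  then show ?thesis
    using bij_betw_finite[OF bij_betw_restrict_Fqn[of n, where 'a='a]] by blast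
qed

lemma card_Fqn: "card (Fqn n :: (nat \<Rightarrow> 'a::{field,finite}) set) = CARD('a) ^ n"
  using bij_betw_same_card[OF bij_betw_restrict_Fqn[of n, where 'a='a]] by (simp add: card_PiE)

lemma CARD_field_ge_2: "2 \<le> CARD('a::{field,finite})"
proof -
  have "card {0::'a, 1} \<le> CARD('a)" by (rule card_mono) auto
  then show ?thesis by simp
qed

lemma bij_betw_span_insert:
  assumes w: "w \<notin> fvs.span X"
  shows "bij_betw (\<lambda>(c, v). fscale c w + v) (UNIV \<times> fvs.span X) (fvs.span (insert w X))"
proof (rule bij_betw_imageI)
  show "inj_on (\<lambda>(c, v). fscale c w + v) (UNIV \<times> fvs.span X)"
  proof (rule inj_onI, clarify)
    fix c c' :: 'a and v v' assume v: "v \<in> fvs.span X" "v' \<in> fvs.span X"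
      and eq: "fscale c w + v = fscale c' w + v'"
    have "fscale (c - c') w = v' - v"
      using eq by (auto simp: fscale_def fun_eq_iff algebra_simps dest!: fun_cong)
    then have span: "fscale (c - c') w \<in> fvs.span X"
      using v fvs.span_diff by auto
    have "c = c'"
    proof (rule ccontr)
      assume "c \<noteq> c'"
      then have "w = fscale (inverse (c - c')) (fscale (c - c') w)"
        by (simp add: fscale_def fun_eq_iff)
      then show False using w span fvs.span_scale by metis
    qed
    with eq show "c = c' \<and> v = v'" by simp
  qed
  show "(\<lambda>(c, v). fscale c w + v) ` (UNIV \<times> fvs.span X) = fvs.span (insert w X)"
  proof (intro equalityI subsetI)
    fix x assume "x \<in> (\<lambda>(c, v). fscale c w + v) ` (UNIV \<times> fvs.span X)"
    then obtain c v where x: "x = fscale c w + v" and v: "v \<in> fvs.span X"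
      by auto
    have "fscale c w \<in> fvs.span (insert w X)"
      by (intro fvs.span_scale fvs.span_base) simp
    moreover have "v \<in> fvs.span (insert w X)"
      using v fvs.span_mono[OF subset_insertI] by blast
    ultimately show "x \<in> fvs.span (insert w X)"
      unfolding x by (rule fvs.span_add)
  next
    fix x assume "x \<in> fvs.span (insert w X)"
    then obtain c where "x - fscale c w \<in> fvs.span X"
      unfolding fvs.span_insert by auto
    then show "x \<in> (\<lambda>(c, v). fscale c w + v) ` (UNIV \<times> fvs.span X)"
      by (intro image_eqI[where x = "(c, x - fscale c w)"]) auto
  qed
qed

lemma card_span_insert:
  fixes X :: "(nat \<Rightarrow> 'a::{field,finite}) set"
  assumes "w \<notin> fvs.span X"
  shows "card (fvs.span (insert w X)) = CARD('a) * card (fvs.span X)"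
  using bij_betw_same_card[OF bij_betw_span_insert[OF assms]] by (simp add: card_cartesian_product)

lemma finite_span_insert:
  fixes X :: "(nat \<Rightarrow> 'a::{field,finite}) set"
  assumes "finite (fvs.span X)" "w \<notin> fvs.span X"
  shows "finite (fvs.span (insert w X))"
  using bij_betw_finite[OF bij_betw_span_insert[OF assms(2)]] assms(1) by simp

lemma card_span_independent:
  fixes B :: "(nat \<Rightarrow> 'a::{field,finite}) set"
  assumes "finite B" "fvs.independent B"
  shows "finite (fvs.span B) \<and> card (fvs.span B) = CARD('a) ^ card B"
  using assms
proof (induction B rule: finite_induct)
  case empty
  then show ?case by (simp add: fvs.span_empty)
next
  case (insert b B)
  then have "fvs.independent B" "b \<notin> fvs.span B"
    by (auto simp: fvs.independent_insert)
  with insert show ?case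
    by (simp add: finite_span_insert card_span_insert)
qed

(* The ambient type nat \<Rightarrow> 'a is infinite-dimensional, so the finite-dimensional theory of
   Vector_Spaces does not apply; dimensions of subspaces of some F_q^n are handled by counting,
   via card V = q ^ dim V. *)
definition fin_subspace :: "(nat \<Rightarrow> 'a::field) set \<Rightarrow> bool" where
  "fin_subspace V \<longleftrightarrow> fvs.subspace V \<and> (\<exists>n. V \<subseteq> Fqn n)"

lemma fin_subspace_Fqn: "fin_subspace (Fqn n)"
  unfolding fin_subspace_def using subspace_Fqn by blast

lemma fin_subspace_subspace: "fin_subspace V \<Longrightarrow> fvs.subspace V"
  unfolding fin_subspace_def by blast

lemma fin_subspace_subset: "fin_subspace V \<Longrightarrow> fvs.subspace W \<Longrightarrow> W \<subseteq> V \<Longrightarrow> fin_subspace W"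
  unfolding fin_subspace_def by blast

lemma fin_subspace_Int: "fin_subspace V \<Longrightarrow> fin_subspace W \<Longrightarrow> fin_subspace (V \<inter> W)"
  unfolding fin_subspace_def using fvs.subspace_inter by blast

lemma fin_subspace_span_Un:
  assumes "fin_subspace V" "fin_subspace W"
  shows "fin_subspace (fvs.span (V \<union> W))"
proof -
  obtain m m' where "V \<subseteq> Fqn m" "W \<subseteq> Fqn m'"
    using assms unfolding fin_subspace_def by blast
  then have "V \<union> W \<subseteq> Fqn (max m m')"
    using Fqn_mono[of m "max m m'"] Fqn_mono[of m' "max m m'"] by auto
  then have "fvs.span (V \<union> W) \<subseteq> Fqn (max m m')"
    by (rule fvs.span_minimal[OF _ subspace_Fqn])
  then show ?thesis unfolding fin_subspace_def by blast
qed

lemma finite_fin_subspace: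
  fixes V :: "(nat \<Rightarrow> 'a::{field,finite}) set"
  shows "fin_subspace V \<Longrightarrow> finite V"
  unfolding fin_subspace_def using finite_Fqn finite_subset by blast

lemma card_fin_subspace:
  fixes V :: "(nat \<Rightarrow> 'a::{field,finite}) set"
  assumes "fin_subspace V"
  shows "card V = CARD('a) ^ fvs.dim V"
proof -
  obtain B where B: "B \<subseteq> V" "fvs.independent B" "V \<subseteq> fvs.span B" "card B = fvs.dim V"
    by (rule fvs.basis_exists)
  have "fvs.span B = V"
    using B fin_subspace_subspace[OF assms] fvs.span_subspace by blast
  moreover have "finite B"
    using B(1) finite_fin_subspace[OF assms] finite_subset by blast
  ultimately show ?thesis
    using card_span_independent[OF _ B(2)] B(4) by auto
qed

lemma dim_fin_subspace_eq:
  fixes V :: "(nat \<Rightarrow> 'a::{field,finite}) set"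
  assumes "fin_subspace V" "card V = CARD('a) ^ m"
  shows "fvs.dim V = m"
  using card_fin_subspace[OF assms(1)] assms(2) CARD_field_ge_2[where 'a='a]
  by (simp add: power_inject_exp)

lemma dim_Fqn: "fvs.dim (Fqn n :: (nat \<Rightarrow> 'a::{field,finite}) set) = n"
  by (rule dim_fin_subspace_eq[OF fin_subspace_Fqn card_Fqn])

lemma fin_subspace_dim_mono:
  fixes V :: "(nat \<Rightarrow> 'a::{field,finite}) set"
  assumes "fin_subspace V" "fin_subspace W" "V \<subseteq> W"
  shows "fvs.dim V \<le> fvs.dim W"
proof -
  have "card V \<le> card W"
    using card_mono[OF finite_fin_subspace[OF assms(2)] assms(3)] .
  then show ?thesis
    using card_fin_subspace[OF assms(1)] card_fin_subspace[OF assms(2)] CARD_field_ge_2[where 'a='a]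
    by (simp add: power_le_imp_le_exp)
qed

lemma fin_subspace_eq_if_dim_le:
  fixes V :: "(nat \<Rightarrow> 'a::{field,finite}) set"
  assumes "fin_subspace V" "fin_subspace W" "V \<subseteq> W" "fvs.dim W \<le> fvs.dim V"
  shows "V = W"
proof -
  have "fvs.dim V = fvs.dim W"
    using fin_subspace_dim_mono[OF assms(1-3)] assms(4) by simp
  then have "card V = card W"
    using card_fin_subspace[OF assms(1)] card_fin_subspace[OF assms(2)] by simp
  then show ?thesis
    using card_subset_eq[OF finite_fin_subspace[OF assms(2)] assms(3)] by blast
qed

lemma card_fibre_plus:
  fixes X Y :: "(nat \<Rightarrow> 'a::field) set"
  assumes X: "fvs.subspace X" and Y: "fvs.subspace Y" and x0: "x0 \<in> X" and y0: "y0 \<in> Y"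
  shows "card {p \<in> X \<times> Y. fst p + snd p = x0 + y0} = card (X \<inter> Y)"
proof -
  have "bij_betw (\<lambda>t. (x0 + t, y0 - t)) (X \<inter> Y) {p \<in> X \<times> Y. fst p + snd p = x0 + y0}"
  proof (rule bij_betwI[where g = "\<lambda>p. fst p - x0"])
    show "(\<lambda>t. (x0 + t, y0 - t)) \<in> X \<inter> Y \<rightarrow> {p \<in> X \<times> Y. fst p + snd p = x0 + y0}"
      using x0 y0 fvs.subspace_add[OF X] fvs.subspace_diff[OF Y] by auto
    show "(\<lambda>p. fst p - x0) \<in> {p \<in> X \<times> Y. fst p + snd p = x0 + y0} \<rightarrow> X \<inter> Y"
    proof
      fix p assume "p \<in> {p \<in> X \<times> Y. fst p + snd p = x0 + y0}"
      then obtain a b where p: "p = (a, b)" "a \<in> X" "b \<in> Y" "a + b = x0 + y0"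
        by auto
      then have "a - x0 = y0 - b"
        by (metis add_diff_cancel_left' add_diff_cancel_right' add.commute diff_diff_eq2 diff_add_eq)
      moreover have "a - x0 \<in> X" "y0 - b \<in> Y"
        using p x0 y0 fvs.subspace_diff[OF X] fvs.subspace_diff[OF Y] by auto
      ultimately show "fst p - x0 \<in> X \<inter> Y"
        by (simp add: p)
    qed
    show "fst (x0 + t, y0 - t) - x0 = t" for t
      by simp
    show "(x0 + (fst p - x0), y0 - (fst p - x0)) = p"
      if "p \<in> {p \<in> X \<times> Y. fst p + snd p = x0 + y0}" for p
    proof -
      from that obtain a b where p: "p = (a, b)" "a + b = x0 + y0"
        by auto
      then have "y0 - (a - x0) = b"
        by (metis add_diff_cancel_left' diff_diff_eq2 add.commute)
      then show ?thesis
        by (simp add: p)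
    qed
  qed
  then show ?thesis by (rule sym[OF bij_betw_same_card])
qed

lemma card_span_Un_mult_card_Int:
  fixes X Y :: "(nat \<Rightarrow> 'a::{field,finite}) set"
  assumes X: "fvs.subspace X" "finite X" and Y: "fvs.subspace Y" "finite Y"
  shows "card (fvs.span (X \<union> Y)) * card (X \<inter> Y) = card X * card Y"
proof -
  have spans: "fvs.span X = X" "fvs.span Y = Y"
    using X Y by simp_all
  have "fvs.span (X \<union> Y) = {x + y | x y. x \<in> X \<and> y \<in> Y}"
    using fvs.span_Un[of X Y] unfolding spans .
  then have sums: "fvs.span (X \<union> Y) = (\<lambda>p. fst p + snd p) ` (X \<times> Y)"
    by force
  have "card X * card Y = card (X \<times> Y)"
    by (simp add: card_cartesian_product)
  also have "\<dots> = (\<Sum>z\<in>fvs.span (X \<union> Y). card {p \<in> X \<times> Y. fst p + snd p = z})"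
    using sum.group[of "X \<times> Y" "fvs.span (X \<union> Y)" "\<lambda>p. fst p + snd p" "\<lambda>_. 1::nat"] X Y sums
    by simp
  also have "\<dots> = (\<Sum>z\<in>fvs.span (X \<union> Y). card (X \<inter> Y))"
  proof (rule sum.cong[OF refl])
    fix z assume "z \<in> fvs.span (X \<union> Y)"
    then obtain x y where "x \<in> X" "y \<in> Y" "z = x + y"
      unfolding sums by auto
    then show "card {p \<in> X \<times> Y. fst p + snd p = z} = card (X \<inter> Y)"
      using card_fibre_plus[OF X(1) Y(1)] by blast
  qed
  finally show ?thesis by simp
qed

lemma dim_span_Un_add_dim_Int:
  fixes X Y :: "(nat \<Rightarrow> 'a::{field,finite}) set"
  assumes X: "fin_subspace X" and Y: "fin_subspace Y"
  shows "fvs.dim (fvs.span (X \<union> Y)) + fvs.dim (X \<inter> Y) = fvs.dim X + fvs.dim Y"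
proof -
  have XY: "fin_subspace (fvs.span (X \<union> Y))" "fin_subspace (X \<inter> Y)"
    using fin_subspace_span_Un[OF X Y] fin_subspace_Int[OF X Y] .
  have "card (fvs.span (X \<union> Y)) * card (X \<inter> Y) = card X * card Y"
    by (rule card_span_Un_mult_card_Int)
      (simp_all add: fin_subspace_subspace finite_fin_subspace X Y)
  then have "CARD('a) ^ (fvs.dim (fvs.span (X \<union> Y)) + fvs.dim (X \<inter> Y))
      = CARD('a) ^ (fvs.dim X + fvs.dim Y)"
    by (simp add: card_fin_subspace X Y XY power_add)
  then show ?thesis
    using CARD_field_ge_2[where 'a='a] by (simp add: power_inject_exp)
qed

lemma span_span_Un: "fvs.span (fvs.span X \<union> Y) = fvs.span (X \<union> Y)"
proof
  show "fvs.span (fvs.span X \<union> Y) \<subseteq> fvs.span (X \<union> Y)"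
    by (rule fvs.span_minimal) (auto intro: fvs.span_mono[THEN subsetD] fvs.span_base)
  show "fvs.span (X \<union> Y) \<subseteq> fvs.span (fvs.span X \<union> Y)"
    by (rule fvs.span_mono) (auto intro: fvs.span_base)
qed

definition indep_lists :: "(nat \<Rightarrow> 'a::field) set \<Rightarrow> nat \<Rightarrow> (nat \<Rightarrow> 'a) list set" where
  "indep_lists V m = {xs. length xs = m \<and> distinct xs \<and> set xs \<subseteq> V \<and> fvs.independent (set xs)}"

definition grass :: "(nat \<Rightarrow> 'a::field) set \<Rightarrow> nat \<Rightarrow> (nat \<Rightarrow> 'a) set set" where
  "grass V h = {W. fvs.subspace W \<and> W \<subseteq> V \<and> fvs.dim W = h}"

lemma Grass_eq_grass: "Grass n k = grass (Fqn n) k"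
  unfolding Grass_def grass_def by simp

lemma finite_indep_lists: "finite V \<Longrightarrow> finite (indep_lists V m)"
  by (rule finite_subset[OF _ finite_lists_length_eq[of V m]]) (auto simp: indep_lists_def)

lemma finite_grass: "finite V \<Longrightarrow> finite (grass V h)"
  by (rule finite_subset[of _ "Pow V"]) (auto simp: grass_def)

lemma grass_mono: "V \<subseteq> W \<Longrightarrow> grass V h \<subseteq> grass W h"
  by (auto simp: grass_def)

lemma fin_subspace_grass: "fin_subspace V \<Longrightarrow> H \<in> grass V h \<Longrightarrow> fin_subspace H"
  unfolding grass_def using fin_subspace_subset by blast

lemma grass_dim_le:
  fixes W :: "(nat \<Rightarrow> 'a::{field,finite}) set"
  assumes "fin_subspace V" "H \<in> grass V h" "fin_subspace W" "H \<subseteq> W"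
  shows "h \<le> fvs.dim W"
  using fin_subspace_dim_mono[OF fin_subspace_grass[OF assms(1,2)] assms(3,4)] assms(2)
  by (simp add: grass_def)

lemma span_indep_list_in_grass:
  assumes "fvs.subspace V" "xs \<in> indep_lists V m"
  shows "fvs.span (set xs) \<in> grass V m"
  using assms fvs.span_minimal fvs.dim_span_eq_card_independent[of "set xs"]
  by (auto simp: indep_lists_def grass_def distinct_card)

lemma indep_lists_Suc:
  assumes "fvs.subspace V"
  shows "indep_lists V (Suc m)
    = (\<lambda>(xs, x). x # xs) ` (SIGMA xs:indep_lists V m. V - fvs.span (set xs))"
proof (intro equalityI subsetI)
  fix ys assume ys: "ys \<in> indep_lists V (Suc m)"
  then obtain x xs where ys_eq: "ys = x # xs"
    by (cases ys) (auto simp: indep_lists_def)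
  with ys have "xs \<in> indep_lists V m" "x \<in> V - fvs.span (set xs)"
    by (auto simp: indep_lists_def fvs.independent_insert dest: fvs.independent_mono)
  then show "ys \<in> (\<lambda>(xs, x). x # xs) ` (SIGMA xs:indep_lists V m. V - fvs.span (set xs))"
    unfolding ys_eq by force
next
  fix ys assume "ys \<in> (\<lambda>(xs, x). x # xs) ` (SIGMA xs:indep_lists V m. V - fvs.span (set xs))"
  then obtain xs x where "ys = x # xs" "xs \<in> indep_lists V m" "x \<in> V" "x \<notin> fvs.span (set xs)"
    by auto
  then show "ys \<in> indep_lists V (Suc m)"
    using fvs.span_base[of x "set xs"]
    by (auto simp: indep_lists_def fvs.independent_insertI)
qed

lemma card_indep_lists:
  fixes V :: "(nat \<Rightarrow> 'a::{field,finite}) set"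
  assumes V: "fin_subspace V" and m: "m \<le> fvs.dim V"
  shows "real (card (indep_lists V m)) = (\<Prod>i<m. real CARD('a) ^ fvs.dim V - real CARD('a) ^ i)"
  using m
proof (induction m)
  case 0
  have "indep_lists V 0 = {[]}" by (auto simp: indep_lists_def fvs.independent_empty)
  then show ?case by simp
next
  case (Suc m)
  let ?q = "CARD('a)" and ?d = "fvs.dim V"
  have sV: "fvs.subspace V" and fV: "finite V"
    using V fin_subspace_subspace finite_fin_subspace by blast+
  have complement: "card (V - fvs.span (set xs)) = ?q ^ ?d - ?q ^ m"
    if xs: "xs \<in> indep_lists V m" for xs
  proof -
    have sub: "fvs.span (set xs) \<subseteq> V"
      using span_indep_list_in_grass[OF sV xs] by (simp add: grass_def)
    have "card (fvs.span (set xs)) = ?q ^ m"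
      using card_span_independent[of "set xs"] xs by (auto simp: indep_lists_def distinct_card)
    then show ?thesis
      using card_Diff_subset[OF finite_subset[OF sub fV] sub] card_fin_subspace[OF V] by simp
  qed
  have inj: "inj_on (\<lambda>(xs, x). x # xs) (SIGMA xs:indep_lists V m. V - fvs.span (set xs))"
    by (auto simp: inj_on_def)
  have "card (indep_lists V (Suc m)) = (\<Sum>xs\<in>indep_lists V m. card (V - fvs.span (set xs)))"
    unfolding indep_lists_Suc[OF sV] card_image[OF inj]
    using finite_indep_lists[OF fV] fV by (intro card_SigmaI) auto
  also have "\<dots> = card (indep_lists V m) * (?q ^ ?d - ?q ^ m)"
    using complement by simp
  finally have "real (card (indep_lists V (Suc m)))
      = real (card (indep_lists V m)) * (real ?q ^ ?d - real ?q ^ m)"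
    using Suc.prems power_increasing[of m ?d ?q] CARD_field_ge_2[where 'a='a]
    by (simp add: of_nat_diff)
  with Suc show ?case by simp
qed

lemma real_power_less_and_le:
  assumes "i < h" "h \<le> d" "2 \<le> q"
  shows "real q ^ i < real q ^ h" "real q ^ h \<le> real q ^ d"
  using power_strict_increasing[of i h "real q"] power_increasing[of h d "real q"] assms by auto

lemma span_indep_list_eq:
  fixes W :: "(nat \<Rightarrow> 'a::{field,finite}) set"
  assumes W: "fin_subspace W" "fvs.dim W = h" and xs: "xs \<in> indep_lists W h"
  shows "fvs.span (set xs) = W"
proof (rule fin_subspace_eq_if_dim_le[OF _ W(1)])
  have "fvs.span (set xs) \<in> grass W h"
    using span_indep_list_in_grass[OF fin_subspace_subspace[OF W(1)] xs] .
  then show "fin_subspace (fvs.span (set xs))" "fvs.span (set xs) \<subseteq> W"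
      "fvs.dim W \<le> fvs.dim (fvs.span (set xs))"
    using fin_subspace_grass[OF W(1)] W(2) by (auto simp: grass_def)
qed

lemma indep_lists_eq_UN_grass:
  assumes "fvs.subspace V"
  shows "indep_lists V h = (\<Union>W\<in>grass V h. indep_lists W h)"
proof (intro equalityI subsetI)
  fix xs assume xs: "xs \<in> indep_lists V h"
  then have "xs \<in> indep_lists (fvs.span (set xs)) h"
    using fvs.span_superset by (auto simp: indep_lists_def)
  with span_indep_list_in_grass[OF assms xs] show "xs \<in> (\<Union>W\<in>grass V h. indep_lists W h)"
    by blast
qed (auto simp: grass_def indep_lists_def)

lemma card_indep_lists_eq_sum_grass:
  fixes V :: "(nat \<Rightarrow> 'a::{field,finite}) set"
  assumes V: "fin_subspace V"
  shows "card (indep_lists V h) = (\<Sum>W\<in>grass V h. card (indep_lists W h))"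
  unfolding indep_lists_eq_UN_grass[OF fin_subspace_subspace[OF V]]
proof (rule card_UN_disjoint)
  show "finite (grass V h)"
    using finite_grass[OF finite_fin_subspace[OF V]] .
  show "\<forall>W\<in>grass V h. finite (indep_lists W h)"
    using finite_fin_subspace[OF V] by (auto simp: grass_def intro: finite_indep_lists finite_subset)
  show "\<forall>W\<in>grass V h. \<forall>W'\<in>grass V h. W \<noteq> W' \<longrightarrow> indep_lists W h \<inter> indep_lists W' h = {}"
  proof (intro ballI impI)
    fix W W' assume W: "W \<in> grass V h" "W' \<in> grass V h" "W \<noteq> W'"
    have "xs \<notin> indep_lists W' h" if "xs \<in> indep_lists W h" for xs
      using span_indep_list_eq[of W h xs] span_indep_list_eq[of W' h xs] that W
        fin_subspace_grass[OF V W(1)] fin_subspace_grass[OF V W(2)] by (auto simp: grass_def)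
    then show "indep_lists W h \<inter> indep_lists W' h = {}"
      by blast
  qed
qed

lemma card_grass:
  fixes V :: "(nat \<Rightarrow> 'a::{field,finite}) set"
  assumes V: "fin_subspace V" and h: "h \<le> fvs.dim V"
  shows "real (card (grass V h)) = gauss_binom CARD('a) (fvs.dim V) h"
proof -
  let ?q = "real CARD('a)"
  have "real (card (indep_lists V h)) = (\<Sum>W\<in>grass V h. real (card (indep_lists W h)))"
    using card_indep_lists_eq_sum_grass[OF V] by simp
  also have "\<dots> = (\<Sum>W\<in>grass V h. \<Prod>i<h. ?q ^ h - ?q ^ i)"
  proof (rule sum.cong[OF refl])
    fix W assume W: "W \<in> grass V h"
    then show "real (card (indep_lists W h)) = (\<Prod>i<h. ?q ^ h - ?q ^ i)"
      using card_indep_lists[OF fin_subspace_grass[OF V W]] by (simp add: grass_def)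
  qed
  finally have "(\<Prod>i<h. ?q ^ fvs.dim V - ?q ^ i)
      = real (card (grass V h)) * (\<Prod>i<h. ?q ^ h - ?q ^ i)"
    using card_indep_lists[OF V h] by simp
  moreover have "(\<Prod>i<h. ?q ^ h - ?q ^ i) \<noteq> 0"
  proof -
    have "?q ^ i < ?q ^ h" if "i < h" for i
      using real_power_less_and_le(1)[OF that order_refl CARD_field_ge_2] .
    then show ?thesis by (force simp: prod_zero_iff)
  qed
  ultimately show ?thesis
    unfolding gauss_binom_def by (simp add: prod_dividef field_simps)
qed

lemma gauss_binom_ge_1:
  assumes "h \<le> k" "2 \<le> q"
  shows "1 \<le> gauss_binom q k h"
  unfolding gauss_binom_def
proof (rule prod_ge_1)
  fix i assume "i \<in> {..<h}"
  then have "real q ^ i < real q ^ h" "real q ^ h \<le> real q ^ k"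
    using real_power_less_and_le assms by auto
  then show "1 \<le> (real q ^ k - real q ^ i) / (real q ^ h - real q ^ i)"
    by simp
qed

lemma gauss_binom_self:
  assumes "2 \<le> q"
  shows "gauss_binom q h h = 1"
  unfolding gauss_binom_def
proof (rule prod.neutral, rule ballI)
  fix i assume "i \<in> {..<h}"
  then have "real q ^ i < real q ^ h"
    using real_power_less_and_le assms by auto
  then show "(real q ^ h - real q ^ i) / (real q ^ h - real q ^ i) = 1"
    by simp
qed

lemma gauss_binom_Suc_ge:
  assumes "h \<le> d" "2 \<le> q" "1 \<le> h"
  shows "2 * gauss_binom q d h \<le> gauss_binom q (Suc d) h"
proof -
  have q: "2 \<le> real q" using assms by simp
  have "(\<Prod>i<h. real q * ((real q ^ d - real q ^ i) / (real q ^ h - real q ^ i)))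
      \<le> gauss_binom q (Suc d) h"
    unfolding gauss_binom_def
  proof (rule prod_mono, rule conjI)
    fix i assume "i \<in> {..<h}"
    then have lt: "real q ^ i < real q ^ h" and le: "real q ^ i \<le> real q ^ d"
      using real_power_less_and_le assms by fastforce+
    then show "0 \<le> real q * ((real q ^ d - real q ^ i) / (real q ^ h - real q ^ i))"
      using q by simp
    have "real q * (real q ^ d - real q ^ i) \<le> real q ^ Suc d - real q ^ i"
      using q by (simp add: algebra_simps)
    with lt show "real q * ((real q ^ d - real q ^ i) / (real q ^ h - real q ^ i))
        \<le> (real q ^ Suc d - real q ^ i) / (real q ^ h - real q ^ i)"
      by (simp add: divide_right_mono)
  qed
  then have "real q ^ h * gauss_binom q d h \<le> gauss_binom q (Suc d) h"
    unfolding gauss_binom_def prod.distrib by simp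
  moreover have "2 * gauss_binom q d h \<le> real q ^ h * gauss_binom q d h"
  proof (rule mult_right_mono)
    show "2 \<le> real q ^ h"
      using q self_le_power[of "real q" h] assms(3) by linarith
    show "0 \<le> gauss_binom q d h"
      using gauss_binom_ge_1[OF assms(1,2)] by linarith
  qed
  ultimately show ?thesis
    by linarith
qed

lemma exists_in_span_Un_notin:
  assumes A: "fvs.subspace A" and B: "fvs.subspace B" and "\<not> A \<subseteq> B" "\<not> B \<subseteq> A"
  obtains w where "w \<in> fvs.span (A \<union> B)" "w \<notin> A" "w \<notin> B"
proof -
  obtain a b where a: "a \<in> A" "a \<notin> B" and b: "b \<in> B" "b \<notin> A"
    using assms by blast
  have "a + b \<in> fvs.span (A \<union> B)"
    using a b by (intro fvs.span_add fvs.span_base) auto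
  moreover have "a + b \<notin> A"
    using fvs.subspace_diff[OF A, of "a + b" a] a b by auto
  moreover have "a + b \<notin> B"
    using fvs.subspace_diff[OF B, of "a + b" b] a b by auto
  ultimately show ?thesis by (rule that)
qed

lemma span_insert_notin_subspace:
  assumes X: "fvs.subspace X" and "D \<subseteq> X" and w: "w \<notin> X"
    and y: "y \<in> fvs.span (insert w D)" "y \<notin> fvs.span D"
  shows "y \<notin> X"
proof
  assume yX: "y \<in> X"
  obtain c where c: "y - fscale c w \<in> fvs.span D"
    using y(1) unfolding fvs.span_insert by auto
  have "fvs.span D \<subseteq> X"
    using fvs.span_minimal[OF \<open>D \<subseteq> X\<close> X] .
  then have "y - (y - fscale c w) \<in> X"
    using fvs.subspace_diff[OF X yX] c by blast
  then have cw: "fscale c w \<in> X" by simp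
  have "fscale 0 w = 0"
    by (simp add: fscale_def fun_eq_iff)
  then have "c \<noteq> 0"
    using c y(2) by auto
  then have "fscale (inverse c) (fscale c w) = w"
    by (simp add: fscale_def fun_eq_iff)
  then show False
    using fvs.subspace_scale[OF X cw, of "inverse c"] w by simp
qed

lemma dim_span_insert:
  fixes D :: "(nat \<Rightarrow> 'a::{field,finite}) set"
  assumes D: "fin_subspace D" and U: "fin_subspace (fvs.span (insert w D))" and w: "w \<notin> D"
  shows "fvs.dim (fvs.span (insert w D)) = Suc (fvs.dim D)"
proof -
  have spanD: "fvs.span D = D"
    using fin_subspace_subspace[OF D] by simp
  have "card (fvs.span (insert w D)) = CARD('a) ^ Suc (fvs.dim D)"
    using card_span_insert[of w D] w card_fin_subspace[OF D] by (simp add: spanD)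
  then show ?thesis
    by (rule dim_fin_subspace_eq[OF U])
qed

lemma dim_Int_ge_if_in_grass_span_insert:
  fixes D :: "(nat \<Rightarrow> 'a::{field,finite}) set"
  assumes D: "fin_subspace D" and U: "fin_subspace (fvs.span (insert w D))" and w: "w \<notin> D"
    and H: "H \<in> grass (fvs.span (insert w D)) h"
  shows "h - 1 \<le> fvs.dim (H \<inter> D)"
proof -
  have dimU: "fvs.dim (fvs.span (insert w D)) = Suc (fvs.dim D)"
    by (rule dim_span_insert[OF D U w])
  have H': "fin_subspace H"
    using fin_subspace_grass[OF U H] .
  have "fvs.span (H \<union> D) \<subseteq> fvs.span (insert w D)"
    using H fvs.span_superset[of "insert w D"]
    by (intro fvs.span_minimal) (auto simp: grass_def)
  then have "fvs.dim (fvs.span (H \<union> D)) \<le> Suc (fvs.dim D)"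
    using fin_subspace_dim_mono[OF fin_subspace_span_Un[OF H' D] U] dimU by simp
  then show ?thesis
    using dim_span_Un_add_dim_Int[OF H' D] H by (simp add: grass_def)
qed

lemma obtain_three:
  assumes "3 \<le> card X"
  obtains a b c where "a \<in> X" "b \<in> X" "c \<in> X" "a \<noteq> b" "a \<noteq> c" "b \<noteq> c"
proof -
  obtain S where "S \<subseteq> X" "card S = 3"
    using obtain_subset_with_card_n[OF assms] by blast
  then show ?thesis
    using that by (auto simp: card_3_iff)
qed

locale three_covering_code =
  fixes C :: "(nat \<Rightarrow> 'a::{field,finite}) set set" and n k \<delta> h :: nat
  assumes covering: "covering_code 3 n k \<delta> C"
    and h_pos: "1 \<le> h" and h_le_k: "h \<le> k" and h_large: "2 * k < 2 * h + \<delta>"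
begin

lemma codeword_in_grass: "A \<in> C \<Longrightarrow> A \<in> grass (Fqn n) k"
  using covering unfolding covering_code_def Grass_eq_grass by blast

lemma fin_subspace_codeword: "A \<in> C \<Longrightarrow> fin_subspace A"
  by (rule fin_subspace_grass[OF fin_subspace_Fqn codeword_in_grass])

lemma dim_codeword: "A \<in> C \<Longrightarrow> fvs.dim A = k"
  using codeword_in_grass by (simp add: grass_def)

lemma codeword_not_subset: "A \<in> C \<Longrightarrow> B \<in> C \<Longrightarrow> A \<noteq> B \<Longrightarrow> \<not> A \<subseteq> B"
  using fin_subspace_eq_if_dim_le[OF fin_subspace_codeword fin_subspace_codeword] dim_codeword
  by fastforce

lemma finite_code: "finite C"
  by (rule finite_subset[OF _ finite_grass[OF finite_Fqn]]) (use codeword_in_grass in blast)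

lemma three_codewords_dim_bound:
  assumes A: "A \<in> C" and B: "B \<in> C" and D: "D \<in> C"
    and distinct: "A \<noteq> B" "A \<noteq> D" "B \<noteq> D"
  shows "fvs.dim (A \<inter> B) + fvs.dim (fvs.span (A \<union> B) \<inter> D) + \<delta> \<le> 2 * k"
proof -
  have "{A, B, D} \<subseteq> C" "card {A, B, D} = 3"
    using A B D distinct by auto
  then have "k + \<delta> \<le> fvs.dim (fvs.span (\<Union>{A, B, D}))"
    using covering unfolding covering_code_def by blast
  also have "fvs.span (\<Union>{A, B, D}) = fvs.span (fvs.span (A \<union> B) \<union> D)"
    using span_span_Un[of "A \<union> B" D] by (simp add: Un_assoc)
  finally have "k + \<delta> \<le> fvs.dim (fvs.span (fvs.span (A \<union> B) \<union> D))" .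
  moreover have "fvs.dim (fvs.span (fvs.span (A \<union> B) \<union> D)) + fvs.dim (fvs.span (A \<union> B) \<inter> D)
      = fvs.dim (fvs.span (A \<union> B)) + k"
    using dim_span_Un_add_dim_Int[OF fin_subspace_span_Un fin_subspace_codeword[OF D]]
      fin_subspace_codeword[OF A] fin_subspace_codeword[OF B] dim_codeword[OF D] by simp
  moreover have "fvs.dim (fvs.span (A \<union> B)) + fvs.dim (A \<inter> B) = k + k"
    using dim_span_Un_add_dim_Int[OF fin_subspace_codeword[OF A] fin_subspace_codeword[OF B]]
      dim_codeword[OF A] dim_codeword[OF B] by simp
  ultimately show ?thesis
    by linarith
qed

lemma grass_codeword_dim_Int:
  assumes A: "A \<in> C" and B: "B \<in> C" and H: "H \<in> grass A h" "H \<subseteq> B"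
  shows "h \<le> fvs.dim (A \<inter> B)"
  using H fin_subspace_codeword[OF A] fin_subspace_codeword[OF B]
  by (intro grass_dim_le[OF fin_subspace_codeword[OF A] H(1)] fin_subspace_Int) (auto simp: grass_def)

lemma no_two_partners:
  assumes A: "A \<in> C" and B: "B \<in> C" and D: "D \<in> C"
    and distinct: "A \<noteq> B" "A \<noteq> D" "B \<noteq> D"
    and "h \<le> fvs.dim (A \<inter> B)" "h \<le> fvs.dim (A \<inter> D)"
  shows False
proof -
  have "fvs.dim (A \<inter> D) \<le> fvs.dim (fvs.span (A \<union> B) \<inter> D)"
    using fin_subspace_codeword A B D fvs.span_superset[of "A \<union> B"]
    by (intro fin_subspace_dim_mono fin_subspace_Int fin_subspace_span_Un) auto
  then show False
    using three_codewords_dim_bound[OF A B D distinct] assms(7,8) h_large by linarith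
qed

(* When A has a partner B with dim (A \<inter> B) > h, these subspaces compensate for the h-subspaces
   of A \<inter> B that A has to share with B. *)
definition extra :: "(nat \<Rightarrow> 'a) set \<Rightarrow> (nat \<Rightarrow> 'a) set set" where
  "extra A = {H \<in> grass (Fqn n) h. \<exists>B\<in>C. B \<noteq> A \<and> h + 1 \<le> fvs.dim (A \<inter> B)
      \<and> H \<subseteq> fvs.span (A \<union> B) \<and> h - 1 \<le> fvs.dim (H \<inter> (A \<inter> B)) \<and> \<not> H \<subseteq> A \<and> \<not> H \<subseteq> B}"

definition shadow :: "(nat \<Rightarrow> 'a) set \<Rightarrow> (nat \<Rightarrow> 'a) set set" where
  "shadow A = grass A h \<union> extra A"

definition mult :: "(nat \<Rightarrow> 'a) set \<Rightarrow> nat" where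
  "mult H = card {A \<in> C. H \<in> shadow A}"

lemma finite_extra: "finite (extra A)"
  by (rule finite_subset[OF _ finite_grass[OF finite_Fqn]]) (auto simp: extra_def)

lemma shadow_subset_grass: "A \<in> C \<Longrightarrow> shadow A \<subseteq> grass (Fqn n) h"
  using codeword_in_grass by (auto simp: shadow_def extra_def grass_def)

lemma finite_shadow: "A \<in> C \<Longrightarrow> finite (shadow A)"
  using shadow_subset_grass finite_grass[OF finite_Fqn] finite_subset by blast

lemma extra_not_subset_codeword:
  assumes A: "A \<in> C" and H: "H \<in> extra A" and D: "D \<in> C"
  shows "\<not> H \<subseteq> D"
proof
  assume HD: "H \<subseteq> D"
  obtain B where B: "B \<in> C" "B \<noteq> A" "h + 1 \<le> fvs.dim (A \<inter> B)" "H \<subseteq> fvs.span (A \<union> B)"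
    "\<not> H \<subseteq> A" "\<not> H \<subseteq> B" and HG: "H \<in> grass (Fqn n) h"
    using H unfolding extra_def by blast
  have "D \<noteq> A" "D \<noteq> B"
    using HD B by auto
  then have "fvs.dim (A \<inter> B) + fvs.dim (fvs.span (A \<union> B) \<inter> D) + \<delta> \<le> 2 * k"
    using three_codewords_dim_bound[OF A B(1) D] B(2) by simp
  moreover have "h \<le> fvs.dim (fvs.span (A \<union> B) \<inter> D)"
    using HD B(4) fin_subspace_codeword A B(1) D
    by (intro grass_dim_le[OF fin_subspace_Fqn HG] fin_subspace_Int fin_subspace_span_Un) auto
  ultimately show False
    using B(3) h_large by linarith
qed

lemma extra_partner_eq:
  assumes X: "X \<in> C" and Y: "Y \<in> C" and "X \<noteq> Y" and H: "H \<in> extra X"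
    and BY: "BY \<in> C" "BY \<noteq> Y" "h + 1 \<le> fvs.dim (Y \<inter> BY)" "H \<subseteq> fvs.span (Y \<union> BY)"
  shows "X = BY"
proof (rule ccontr)
  assume "X \<noteq> BY"
  obtain BX where BX: "BX \<in> C" "h - 1 \<le> fvs.dim (H \<inter> (X \<inter> BX))" and HG: "H \<in> grass (Fqn n) h"
    using H unfolding extra_def by blast
  have HXB: "fin_subspace (H \<inter> (X \<inter> BX))"
    using fin_subspace_grass[OF fin_subspace_Fqn HG] fin_subspace_codeword X BX(1)
    by (intro fin_subspace_Int)
  have "fvs.dim (H \<inter> (X \<inter> BX)) \<le> fvs.dim (fvs.span (Y \<union> BY) \<inter> X)"
    using BY(4) fin_subspace_codeword X Y BY(1)
    by (intro fin_subspace_dim_mono[OF HXB] fin_subspace_Int fin_subspace_span_Un) auto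
  moreover have "fvs.dim (Y \<inter> BY) + fvs.dim (fvs.span (Y \<union> BY) \<inter> X) + \<delta> \<le> 2 * k"
    using three_codewords_dim_bound[OF Y BY(1) X] \<open>X \<noteq> Y\<close> \<open>X \<noteq> BY\<close> BY(2) by simp
  ultimately show False
    using BY(3) BX(2) h_large h_pos by linarith
qed

lemma not_three_shadows:
  assumes A: "A1 \<in> C" "A2 \<in> C" "A3 \<in> C" and distinct: "A1 \<noteq> A2" "A1 \<noteq> A3" "A2 \<noteq> A3"
    and H: "H \<in> shadow A1" "H \<in> shadow A2" "H \<in> shadow A3"
  shows False
proof (cases "H \<in> extra A1 \<and> H \<in> extra A2 \<and> H \<in> extra A3")
  case True
  obtain B2 where B2: "B2 \<in> C" "B2 \<noteq> A2" "h + 1 \<le> fvs.dim (A2 \<inter> B2)" "H \<subseteq> fvs.span (A2 \<union> B2)"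
    using True unfolding extra_def by blast
  obtain B3 where B3: "B3 \<in> C" "B3 \<noteq> A3" "h + 1 \<le> fvs.dim (A3 \<inter> B3)" "H \<subseteq> fvs.span (A3 \<union> B3)"
    using True unfolding extra_def by blast
  have "A1 = B2" "A1 = B3"
    using extra_partner_eq[OF A(1,2) distinct(1) _ B2] extra_partner_eq[OF A(1,3) distinct(2) _ B3] True
    by auto
  then show False
    using no_two_partners[OF A distinct] B2(3) B3(3) by (simp add: Int_commute)
next
  case False
  then obtain A where "A \<in> C" "H \<subseteq> A"
    using A H unfolding shadow_def grass_def by auto
  then have "H \<notin> extra A1" "H \<notin> extra A2" "H \<notin> extra A3"
    using extra_not_subset_codeword A by auto
  then have "H \<in> grass A1 h" "H \<subseteq> A2" "H \<subseteq> A3"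
    using H unfolding shadow_def grass_def by auto
  then show False
    using no_two_partners[OF A distinct] grass_codeword_dim_Int[OF A(1)] A(2,3) by blast
qed

lemma mult_le_2: "mult H \<le> 2"
proof (rule ccontr)
  assume "\<not> mult H \<le> 2"
  then have "3 \<le> card {A \<in> C. H \<in> shadow A}"
    unfolding mult_def by simp
  then obtain A1 A2 A3 where "A1 \<in> {A \<in> C. H \<in> shadow A}" "A2 \<in> {A \<in> C. H \<in> shadow A}"
      "A3 \<in> {A \<in> C. H \<in> shadow A}" "A1 \<noteq> A2" "A1 \<noteq> A3" "A2 \<noteq> A3"
    by (rule obtain_three)
  then show False
    using not_three_shadows by blast
qed

lemma mult_pos: "A \<in> C \<Longrightarrow> H \<in> shadow A \<Longrightarrow> 0 < mult H"
  unfolding mult_def using finite_code by (auto simp: card_gt_0_iff)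

lemma inverse_mult_ge_half: "A \<in> C \<Longrightarrow> H \<in> shadow A \<Longrightarrow> 1 / 2 \<le> 1 / real (mult H)"
  using mult_pos[of A H] mult_le_2[of H] by (simp add: field_simps)

lemma mult_eq_1:
  assumes A: "A \<in> C" and H: "H \<in> grass A h" and alone: "\<And>B. B \<in> C \<Longrightarrow> B \<noteq> A \<Longrightarrow> \<not> H \<subseteq> B"
  shows "mult H = 1"
proof -
  have "H \<in> shadow B \<longleftrightarrow> B = A" if "B \<in> C" for B
    using that A H alone extra_not_subset_codeword[OF that _ A]
    by (auto simp: shadow_def grass_def)
  then have "{B \<in> C. H \<in> shadow B} = {A}"
    using A by blast
  then show ?thesis
    unfolding mult_def by simp
qed

lemma span_Un_codewords_subset_Fqn: "A \<in> C \<Longrightarrow> B \<in> C \<Longrightarrow> fvs.span (A \<union> B) \<subseteq> Fqn n"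
  using codeword_in_grass[of A] codeword_in_grass[of B]
  by (intro fvs.span_minimal[OF _ subspace_Fqn]) (auto simp: grass_def)

lemma grass_span_insert_diff_subset_extra:
  assumes A: "A \<in> C" and B: "B \<in> C" "B \<noteq> A" "h + 1 \<le> fvs.dim (A \<inter> B)"
    and w: "w \<in> fvs.span (A \<union> B)" "w \<notin> A" "w \<notin> B"
    and U: "fin_subspace (fvs.span (insert w (A \<inter> B)))"
  shows "grass (fvs.span (insert w (A \<inter> B))) h - grass (A \<inter> B) h \<subseteq> extra A"
proof
  let ?D = "A \<inter> B" and ?U = "fvs.span (insert w (A \<inter> B))"
  fix H assume H: "H \<in> grass ?U h - grass ?D h"
  have D: "fin_subspace ?D"
    using fin_subspace_codeword A B(1) by (intro fin_subspace_Int)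
  then have spanD: "fvs.span ?D = ?D"
    using fin_subspace_subspace by simp
  have UAB: "?U \<subseteq> fvs.span (A \<union> B)"
    using w(1) by (intro fvs.span_minimal) (auto intro: fvs.span_base)
  obtain y where y: "y \<in> H" "y \<notin> ?D"
    using H by (auto simp: grass_def)
  then have "y \<in> ?U"
    using H by (auto simp: grass_def)
  then have "y \<notin> A" "y \<notin> B"
    using span_insert_notin_subspace[of A ?D w y] span_insert_notin_subspace[of B ?D w y]
      fin_subspace_codeword[OF A] fin_subspace_codeword[OF B(1)] fin_subspace_subspace w(2,3) y(2)
    by (auto simp: spanD)
  moreover have "h - 1 \<le> fvs.dim (H \<inter> ?D)"
    using dim_Int_ge_if_in_grass_span_insert[OF D U] H w(2) by blast
  moreover have "H \<in> grass (Fqn n) h" "H \<subseteq> fvs.span (A \<union> B)"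
    using H UAB span_Un_codewords_subset_Fqn[OF A B(1)] by (auto simp: grass_def)
  ultimately show "H \<in> extra A"
    unfolding extra_def using B y(1) by blast
qed

lemma card_extra_ge:
  assumes A: "A \<in> C" and B: "B \<in> C" "B \<noteq> A" "h + 1 \<le> fvs.dim (A \<inter> B)"
  shows "gauss_binom CARD('a) (Suc (fvs.dim (A \<inter> B))) h - gauss_binom CARD('a) (fvs.dim (A \<inter> B)) h
    \<le> real (card (extra A))"
proof -
  let ?D = "A \<inter> B"
  obtain w where w: "w \<in> fvs.span (A \<union> B)" "w \<notin> A" "w \<notin> B"
    using exists_in_span_Un_notin[OF fin_subspace_subspace[OF fin_subspace_codeword[OF A]]
        fin_subspace_subspace[OF fin_subspace_codeword[OF B(1)]]]
      codeword_not_subset A B(1,2) by metis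
  let ?U = "fvs.span (insert w ?D)"
  have D: "fin_subspace ?D"
    using fin_subspace_codeword A B(1) by (intro fin_subspace_Int)
  have "?U \<subseteq> fvs.span (A \<union> B)"
    using w(1) by (intro fvs.span_minimal) (auto intro: fvs.span_base)
  then have U: "fin_subspace ?U"
    using fin_subspace_subset[OF fin_subspace_span_Un fvs.subspace_span] fin_subspace_codeword A B(1)
    by blast
  have dimU: "fvs.dim ?U = Suc (fvs.dim ?D)"
    using dim_span_insert[OF D U] w(2) by simp
  have sub: "grass ?D h \<subseteq> grass ?U h"
    using fvs.span_superset[of "insert w ?D"] by (intro grass_mono) auto
  have finU: "finite (grass ?U h)"
    using finite_grass[OF finite_fin_subspace[OF U]] .
  have "card (grass ?U h) - card (grass ?D h) \<le> card (extra A)"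
    using card_mono[OF finite_extra grass_span_insert_diff_subset_extra[OF A B w U]]
      card_Diff_subset[OF finite_subset[OF sub finU] sub]
    by simp
  moreover have "card (grass ?D h) \<le> card (grass ?U h)"
    using card_mono[OF finU sub] .
  moreover have "real (card (grass ?U h)) = gauss_binom CARD('a) (Suc (fvs.dim ?D)) h"
    using card_grass[OF U] dimU B(3) by simp
  moreover have "real (card (grass ?D h)) = gauss_binom CARD('a) (fvs.dim ?D) h"
    using card_grass[OF D] B(3) by simp
  ultimately show ?thesis
    by linarith
qed

lemma sum_weight_extra_ge:
  assumes A: "A \<in> C"
  shows "real (card (extra A)) / 2 \<le> (\<Sum>H\<in>extra A. 1 / real (mult H))"
proof -
  have "(\<Sum>H\<in>extra A. 1 / 2) \<le> (\<Sum>H\<in>extra A. 1 / real (mult H))"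
    using inverse_mult_ge_half[OF A] by (intro sum_mono) (simp add: shadow_def)
  then show ?thesis by simp
qed

lemma sum_weight_grass_no_partner:
  assumes A: "A \<in> C" and no_partner: "\<And>B. B \<in> C \<Longrightarrow> B \<noteq> A \<Longrightarrow> fvs.dim (A \<inter> B) < h"
  shows "(\<Sum>H\<in>grass A h. 1 / real (mult H)) = gauss_binom CARD('a) k h"
proof -
  have "mult H = 1" if H: "H \<in> grass A h" for H
    using mult_eq_1[OF A H] grass_codeword_dim_Int[OF A _ H] no_partner by fastforce
  then have "(\<Sum>H\<in>grass A h. 1 / real (mult H)) = real (card (grass A h))"
    by simp
  also have "\<dots> = gauss_binom CARD('a) k h"
    using card_grass[OF fin_subspace_codeword[OF A]] dim_codeword[OF A] h_le_k by simp
  finally show ?thesis .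
qed

lemma mult_eq_1_if_not_subset_partner:
  assumes A: "A \<in> C" and B: "B \<in> C" "B \<noteq> A" "h \<le> fvs.dim (A \<inter> B)"
    and H: "H \<in> grass A h" "\<not> H \<subseteq> B"
  shows "mult H = 1"
proof (rule mult_eq_1[OF A H(1)])
  fix B' assume B': "B' \<in> C" "B' \<noteq> A"
  show "\<not> H \<subseteq> B'"
  proof
    assume "H \<subseteq> B'"
    then have "B' = B"
      using no_two_partners[OF A B(1) B'(1)] grass_codeword_dim_Int[OF A B'(1) H(1)] B(2,3) B'(2)
      by blast
    with H(2) \<open>H \<subseteq> B'\<close> show False by simp
  qed
qed

lemma sum_weight_grass_partner:
  assumes A: "A \<in> C" and B: "B \<in> C" "B \<noteq> A" "h \<le> fvs.dim (A \<inter> B)"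
  shows "gauss_binom CARD('a) k h - gauss_binom CARD('a) (fvs.dim (A \<inter> B)) h / 2
    \<le> (\<Sum>H\<in>grass A h. 1 / real (mult H))"
proof -
  have fin: "finite (grass A h)"
    using finite_grass[OF finite_fin_subspace[OF fin_subspace_codeword[OF A]]] .
  have "{H \<in> grass A h. H \<subseteq> B} = grass (A \<inter> B) h"
    by (auto simp: grass_def)
  then have "gauss_binom CARD('a) k h - gauss_binom CARD('a) (fvs.dim (A \<inter> B)) h / 2
      = (\<Sum>H\<in>grass A h. 1 - (if H \<subseteq> B then 1 / 2 else 0))"
    using sum.inter_filter[OF fin, of "\<lambda>_. 1 / 2 :: real" "\<lambda>H. H \<subseteq> B"]
      card_grass[OF fin_subspace_codeword[OF A]] dim_codeword[OF A] h_le_k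
      card_grass[OF fin_subspace_Int[OF fin_subspace_codeword[OF A] fin_subspace_codeword[OF B(1)]]] B(3)
    by (simp add: sum_subtractf)
  also have "\<dots> \<le> (\<Sum>H\<in>grass A h. 1 / real (mult H))"
  proof (rule sum_mono)
    fix H assume H: "H \<in> grass A h"
    show "1 - (if H \<subseteq> B then 1 / 2 else 0) \<le> 1 / real (mult H)"
      using inverse_mult_ge_half[OF A] mult_eq_1_if_not_subset_partner[OF A B H] H
      by (simp add: shadow_def)
  qed
  finally show ?thesis .
qed

lemma sum_weight_extra_ge_partner:
  assumes A: "A \<in> C" and B: "B \<in> C" "B \<noteq> A" "h \<le> fvs.dim (A \<inter> B)"
  shows "gauss_binom CARD('a) (fvs.dim (A \<inter> B)) h / 2 - 1 / 2 \<le> (\<Sum>H\<in>extra A. 1 / real (mult H))"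
proof (cases "fvs.dim (A \<inter> B) = h")
  case True
  then show ?thesis
    using gauss_binom_self[OF CARD_field_ge_2[where 'a='a]] by (simp add: sum_nonneg)
next
  case False
  let ?G = "gauss_binom CARD('a)"
  have "2 * ?G (fvs.dim (A \<inter> B)) h \<le> ?G (Suc (fvs.dim (A \<inter> B))) h"
    using gauss_binom_Suc_ge CARD_field_ge_2[where 'a='a] B(3) h_pos by simp
  moreover have "1 \<le> ?G (fvs.dim (A \<inter> B)) h"
    using gauss_binom_ge_1 B(3) CARD_field_ge_2[where 'a='a] by simp
  ultimately show ?thesis
    using card_extra_ge[OF A B(1,2)] sum_weight_extra_ge[OF A] B(3) False by simp
qed

lemma sum_weight_shadow_ge:
  assumes A: "A \<in> C"
  shows "gauss_binom CARD('a) k h - 1 / 2 \<le> (\<Sum>H\<in>shadow A. 1 / real (mult H))"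
proof -
  have "grass A h \<inter> extra A = {}"
    using extra_not_subset_codeword[OF A _ A] by (auto simp: grass_def)
  then have split: "(\<Sum>H\<in>shadow A. 1 / real (mult H))
      = (\<Sum>H\<in>grass A h. 1 / real (mult H)) + (\<Sum>H\<in>extra A. 1 / real (mult H))"
    unfolding shadow_def
    using finite_grass[OF finite_fin_subspace[OF fin_subspace_codeword[OF A]]] finite_extra
    by (intro sum.union_disjoint) auto
  show ?thesis
  proof (cases "\<exists>B\<in>C. B \<noteq> A \<and> h \<le> fvs.dim (A \<inter> B)")
    case False
    then show ?thesis
      using split sum_weight_grass_no_partner[OF A] sum_nonneg[of "extra A" "\<lambda>H. 1 / real (mult H)"]
      by force
  next
    case True
    then obtain B where B: "B \<in> C" "B \<noteq> A" "h \<le> fvs.dim (A \<inter> B)"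
      by blast
    show ?thesis
      using split sum_weight_grass_partner[OF A B] sum_weight_extra_ge_partner[OF A B] by linarith
  qed
qed

lemma sum_weight_shadows_eq_card_Union:
  "(\<Sum>A\<in>C. \<Sum>H\<in>shadow A. 1 / real (mult H)) = real (card (\<Union>A\<in>C. shadow A))"
proof -
  let ?U = "\<Union>A\<in>C. shadow A"
  have finU: "finite ?U"
    using finite_code finite_shadow by blast
  have "(\<Sum>A\<in>C. \<Sum>H\<in>shadow A. 1 / real (mult H))
      = (\<Sum>A\<in>C. \<Sum>H\<in>?U. if H \<in> shadow A then 1 / real (mult H) else 0)"
  proof (rule sum.cong[OF refl])
    fix A assume "A \<in> C"
    then have "{H \<in> ?U. H \<in> shadow A} = shadow A"
      by blast
    then show "(\<Sum>H\<in>shadow A. 1 / real (mult H))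
        = (\<Sum>H\<in>?U. if H \<in> shadow A then 1 / real (mult H) else 0)"
      using sum.inter_filter[OF finU, of "\<lambda>H. 1 / real (mult H)" "\<lambda>H. H \<in> shadow A"] by simp
  qed
  also have "\<dots> = (\<Sum>H\<in>?U. \<Sum>A\<in>C. if H \<in> shadow A then 1 / real (mult H) else 0)"
    by (rule sum.swap)
  also have "\<dots> = (\<Sum>H\<in>?U. 1)"
  proof (rule sum.cong[OF refl])
    fix H assume "H \<in> ?U"
    then obtain A where "A \<in> C" "H \<in> shadow A"
      by blast
    then have "mult H \<noteq> 0"
      using mult_pos by blast
    then show "(\<Sum>A\<in>C. if H \<in> shadow A then 1 / real (mult H) else 0) = 1"
      using sum.inter_filter[OF finite_code, of "\<lambda>_. 1 / real (mult H)" "\<lambda>A. H \<in> shadow A"]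
      by (simp add: mult_def)
  qed
  finally show ?thesis
    by simp
qed

lemma card_code_bound:
  assumes "k \<le> n"
  shows "real (card C) * (gauss_binom CARD('a) k h - 1 / 2) \<le> gauss_binom CARD('a) n h"
proof -
  have "real (card C) * (gauss_binom CARD('a) k h - 1 / 2)
      \<le> (\<Sum>A\<in>C. \<Sum>H\<in>shadow A. 1 / real (mult H))"
    using sum_mono[of C "\<lambda>_. gauss_binom CARD('a) k h - 1 / 2"] sum_weight_shadow_ge by simp
  also have "\<dots> = real (card (\<Union>A\<in>C. shadow A))"
    by (rule sum_weight_shadows_eq_card_Union)
  also have "\<dots> \<le> real (card (grass (Fqn n :: (nat \<Rightarrow> 'a) set) h))"
    using shadow_subset_grass by (intro of_nat_mono card_mono finite_grass finite_Fqn) blast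
  also have "\<dots> = gauss_binom CARD('a) n h"
    using card_grass[OF fin_subspace_Fqn, of h n] h_le_k assms unfolding dim_Fqn by simp
  finally show ?thesis .
qed

end

lemma Bq_attained:
  assumes "0 < \<alpha>"
  obtains C :: "(nat \<Rightarrow> 'a::{field,finite}) set set"
  where "covering_code \<alpha> n k \<delta> C" "Bq TYPE('a) n k \<delta> \<alpha> = card C"
proof -
  let ?codes = "{C :: (nat \<Rightarrow> 'a) set set. covering_code \<alpha> n k \<delta> C}"
  have "?codes \<subseteq> Pow (grass (Fqn n) k)"
    by (auto simp: covering_code_def Grass_eq_grass)
  then have "finite ?codes"
    using finite_grass[OF finite_Fqn] finite_subset by blast
  moreover have "{} \<in> ?codes"
    using assms by (simp add: covering_code_def)
  ultimately have "Bq TYPE('a) n k \<delta> \<alpha> \<in> card ` ?codes"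
    unfolding Bq_def by (intro Max_in) auto
  then show ?thesis
    using that by blast
qed

lemma floor_parameter_bounds:
  fixes k \<delta> h :: nat
  assumes "0 < \<delta>" "\<delta> \<le> 2 * k" "h = nat \<lfloor>real k + 1 - real \<delta> / 2\<rfloor>"
  shows "1 \<le> h" "h \<le> k" "2 * k < 2 * h + \<delta>"
proof -
  define r where "r = real k + 1 - real \<delta> / 2"
  have "1 \<le> \<lfloor>r\<rfloor>"
    using assms(2) unfolding r_def by linarith
  then have "real h = of_int \<lfloor>r\<rfloor>"
    using assms(3) unfolding r_def by simp
  then have "real h \<le> r" "r < real h + 1" "1 \<le> real h"
    using \<open>1 \<le> \<lfloor>r\<rfloor>\<close> by linarith+
  then show "1 \<le> h" "h \<le> k" "2 * k < 2 * h + \<delta>"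
    using assms(1) unfolding r_def by linarith+
qed

theorem mainTheorem3:
  fixes q n k \<delta> h :: nat
  assumes "q = card (UNIV :: 'a set)"
    and "0 < n" and "0 < k" and "0 < \<delta>" and "k \<le> n" and "\<delta> \<le> 2 * k"
    and "h = nat \<lfloor>real k + 1 - real \<delta> / 2\<rfloor>"
  shows "real (Bq TYPE('a::{field,finite}) n k \<delta> 3)
           \<le> (1 + 1 / (2 * gauss_binom q k h - 1)) * (gauss_binom q n h / gauss_binom q k h)"
proof -
  obtain C :: "(nat \<Rightarrow> 'a) set set" where C: "covering_code 3 n k \<delta> C"
    and Bq_eq: "Bq TYPE('a) n k \<delta> 3 = card C"
    using Bq_attained[of 3 n k \<delta>] by auto
  interpret three_covering_code C n k \<delta> h
    using C floor_parameter_bounds[OF assms(4,6,7)] by unfold_locales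
  let ?K = "gauss_binom q k h" and ?M = "gauss_binom q n h"
  have "1 \<le> ?K"
    using gauss_binom_ge_1[OF h_le_k] CARD_field_ge_2[where 'a='a] assms(1) by simp
  moreover have "real (card C) * (?K - 1 / 2) \<le> ?M"
    using card_code_bound[OF assms(5)] assms(1) by simp
  ultimately have "real (card C) \<le> ?M / (?K - 1 / 2)"
    by (simp add: field_simps)
  also have "\<dots> = (1 + 1 / (2 * ?K - 1)) * (?M / ?K)"
    using \<open>1 \<le> ?K\<close> by (simp add: field_simps)
  finally show ?thesis
    using Bq_eq by simp
qed
end
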